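(* Let $(X_1,X_2)$ be a nonnegative random vector and let $\overline F_T$ be a DFR survival function on $[0,\infty)$. Assume there exists an $N_1$-distributional version $\{Z_2^{x_1}:x_1\in N_1\}$ of $X_2$ given $X_1$ such that $Z_2^{x_1}\le_{ST}X_1$ for all $x_1\in N_1$. Then $$\big(E[\overline F_T(X_1)]\big)^2\le E[\overline F_T(X_1+X_2)]\,\overline F_T(0).$$
   Context: A survival function $\overline G$ is DFR if for every $z\ge0$ the map $t\mapsto\overline G(z+t)/\overline G(t)$ is increasing (on $\{t:\overline G(t)>0\}$). For random variables $X,Y$, $X\le_{ST}Y$ means $P(X>t)\le P(Y>t)$ for all real $t$. Let $F_1$ be the law of $X_1$ and $N_1\subseteq\mathbb R_+$ a Borel set with $P(X_1\in N_1)=1$. A family $\{\mu^{x}:x\in N_1\}$ of probability measures on $\mathbb R_+$ with $x\mapsto\mu^{x}(B)$ measurable for every Borel $B$ is an $N_1$ regular conditional distribution of $X_2$ given $X_1$ if $P(X_1\in A,X_2\in B)=\int_A\mu^{x}(B)\,dF_1(x)$ for all Borel $A\subseteq N_1$, $B\subseteq\mathbb R_+$; an $N_1$-distributional version of $X_2$ given $X_1$ is a family of random variables $\{Z_2^{x}:x\in N_1\}$ with $Z_2^{x}$ having law $\mu^{x}$ for such a regular conditional distribution. *)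

theory Defs
  imports "HOL-Probability.Probability"
begin

definition survival_fun_nonneg :: "(real \<Rightarrow> real) \<Rightarrow> bool" where
  "survival_fun_nonneg G \<longleftrightarrow>
     (\<exists>\<nu>::real measure. prob_space \<nu> \<and> sets \<nu> = sets borel \<and>
        (\<forall>t\<ge>0. G t = measure \<nu> {t<..}))"

definition DFR :: "(real \<Rightarrow> real) \<Rightarrow> bool" where
  "DFR G \<longleftrightarrow>
     (\<forall>z\<ge>0. \<forall>s t. 0 \<le> s \<longrightarrow> s \<le> t \<longrightarrow> G s > 0 \<longrightarrow> G t > 0 \<longrightarrow>
        G (z + s) / G s \<le> G (z + t) / G t)"

definition regular_cond_distr ::
    "'a measure \<Rightarrow> ('a \<Rightarrow> real) \<Rightarrow> ('a \<Rightarrow> real) \<Rightarrow> real set \<Rightarrow> (real \<Rightarrow> real measure) \<Rightarrow> bool" where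
  "regular_cond_distr M X1 X2 N1 \<mu> \<longleftrightarrow>
     N1 \<in> sets borel \<and> N1 \<subseteq> {0..} \<and>
     measure M {\<omega> \<in> space M. X1 \<omega> \<in> N1} = 1 \<and>
     (\<forall>x\<in>N1. prob_space (\<mu> x) \<and> sets (\<mu> x) = sets borel \<and> measure (\<mu> x) {0..} = 1) \<and>
     (\<forall>B\<in>sets borel. (\<lambda>x. measure (\<mu> x) B) \<in> borel_measurable (restrict_space borel N1)) \<and>
     (\<forall>A\<in>sets borel. \<forall>B\<in>sets borel. A \<subseteq> N1 \<longrightarrow> B \<subseteq> {0..} \<longrightarrow>
        measure M {\<omega> \<in> space M. X1 \<omega> \<in> A \<and> X2 \<omega> \<in> B} =
        (LINT x:A | distr M borel X1. measure (\<mu> x) B))"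

text \<open>Usual stochastic order Z \<le>_ST X between a random variable Z with law \<nu>
  and a random variable X on M: P(Z > t) \<le> P(X > t) for all real t.
  (This only depends on the law \<nu> of Z.)\<close>
definition st_le_law :: "real measure \<Rightarrow> 'a measure \<Rightarrow> ('a \<Rightarrow> real) \<Rightarrow> bool" where
  "st_le_law \<nu> M X \<longleftrightarrow> (\<forall>t::real. measure \<nu> {t<..} \<le> measure M {\<omega> \<in> space M. X \<omega> > t})"

end

theory Submission
  imports Defs
begin

text \<open>
  Two ingredients are combined.
  (1) DFR gives the pointwise bound G(x) G(y) \<le> G(x + y) G(0) for x, y \<ge> 0, hence
      E[G(X1) G(X2)] \<le> E[G(X1 + X2)] G(0).
  (2) The stochastic-order hypothesis on the conditional laws of X2 given X1 yields the
      rectangle inequality P(X1 < s) P(X1 < t) \<le> P(X1 < s, X2 < t): conditionally on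
      X1 = x, P(X2 < t) \<ge> P(X1 < t).  Writing G(x) = \<integral> [x < s] d\<nu>(s) and using Fubini,
      E[G(X1)]^2 and E[G(X1) G(X2)] become the \<nu> \<otimes> \<nu>-integrals of the two sides of the
      rectangle inequality, so (E[G(X1)])^2 \<le> E[G(X1) G(X2)].
\<close>

lemma DFR_product_le:
  assumes "DFR G" and bounds: "\<And>y. 0 \<le> y \<Longrightarrow> 0 \<le> G y \<and> G y \<le> G 0"
    and "0 \<le> x" and "0 \<le> y"
  shows "G x * G y \<le> G (x + y) * G 0"
proof (cases "G y = 0")
  case True
  then show ?thesis using bounds[of "x + y"] bounds[of 0] assms(3,4) by simp
next
  case False
  then have Gy: "0 < G y" and G0: "0 < G 0"
    using bounds[of y] \<open>0 \<le> y\<close> by linarith+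
  have "G (x + 0) / G 0 \<le> G (x + y) / G y"
    using \<open>DFR G\<close> \<open>0 \<le> x\<close> \<open>0 \<le> y\<close> Gy G0 unfolding DFR_def by blast
  then show ?thesis using Gy G0 by (simp add: field_simps)
qed

text \<open>A lower bound on P(X > s) for all s < t passes to P(X \<ge> t),
  by continuity of the measure along the decreasing events {X > t - 1/(n+1)}.\<close>
lemma (in finite_measure) measure_ge_bound_from_gt:
  fixes X :: "'a \<Rightarrow> real"
  assumes X: "X \<in> borel_measurable M"
    and bound: "\<And>s. s < t \<Longrightarrow> c \<le> measure M {\<omega>\<in>space M. s < X \<omega>}"
  shows "c \<le> measure M {\<omega>\<in>space M. t \<le> X \<omega>}"
proof -
  define A where "A n = {\<omega>\<in>space M. t - 1 / real (Suc n) < X \<omega>}" for n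
  have "decseq A"
  proof (rule decseq_SucI)
    fix n
    have "1 / real (Suc (Suc n)) \<le> 1 / real (Suc n)" by (simp add: frac_le)
    then show "A (Suc n) \<subseteq> A n" unfolding A_def by auto
  qed
  moreover have "range A \<subseteq> sets M"
    unfolding A_def using X by auto
  moreover have "(\<Inter>n. A n) = {\<omega>\<in>space M. t \<le> X \<omega>}"
  proof (intro set_eqI iffI)
    fix \<omega> assume "\<omega> \<in> (\<Inter>n. A n)"
    then have "\<omega> \<in> space M" and close: "\<And>n. t - 1 / real (Suc n) < X \<omega>"
      unfolding A_def by auto
    have "t \<le> X \<omega>"
    proof (rule ccontr)
      assume "\<not> t \<le> X \<omega>"
      then obtain n where "1 / real (Suc n) < t - X \<omega>"
        using reals_Archimedean[of "t - X \<omega>"] by (auto simp: field_simps)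
      with close[of n] show False by linarith
    qed
    with \<open>\<omega> \<in> space M\<close> show "\<omega> \<in> {\<omega>\<in>space M. t \<le> X \<omega>}" by simp
  next
    fix \<omega> assume "\<omega> \<in> {\<omega>\<in>space M. t \<le> X \<omega>}"
    then show "\<omega> \<in> (\<Inter>n. A n)"
      unfolding A_def by (auto intro: less_le_trans[of _ t] simp del: of_nat_Suc)
  qed
  ultimately have "(\<lambda>n. measure M (A n)) \<longlonglongrightarrow> measure M {\<omega>\<in>space M. t \<le> X \<omega>}"
    using finite_Lim_measure_decseq by metis
  moreover have "c \<le> measure M (A n)" for n
    unfolding A_def by (rule bound) simp
  ultimately show ?thesis
    by (intro LIMSEQ_le_const) auto
qed

lemma st_le_law_lower_cdf:
  fixes X :: "'a \<Rightarrow> real"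
  assumes "prob_space M" and X: "X \<in> borel_measurable M"
    and "prob_space \<nu>" and sets_\<nu>: "sets \<nu> = sets borel" and nonneg: "measure \<nu> {0..} = 1"
    and st: "st_le_law \<nu> M X"
  shows "measure M {\<omega>\<in>space M. X \<omega> < t} \<le> measure \<nu> {0..<t}"
proof -
  interpret M: prob_space M by fact
  interpret \<nu>: prob_space \<nu> by fact
  have tail: "measure \<nu> {t..} \<le> measure M {\<omega>\<in>space M. t \<le> X \<omega>}"
  proof (rule M.measure_ge_bound_from_gt[OF X])
    fix s assume "s < t"
    then have "measure \<nu> {t..} \<le> measure \<nu> {s<..}"
      by (intro \<nu>.finite_measure_mono) (auto simp: sets_\<nu>)
    also have "\<dots> \<le> measure M {\<omega>\<in>space M. s < X \<omega>}"
      using st unfolding st_le_law_def by simp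
    finally show "measure \<nu> {t..} \<le> measure M {\<omega>\<in>space M. s < X \<omega>}" .
  qed
  have "1 = measure \<nu> {0..}" using nonneg by simp
  also have "\<dots> \<le> measure \<nu> ({0..<t} \<union> {t..})"
    by (rule \<nu>.finite_measure_mono) (auto simp: sets_\<nu>)
  also have "\<dots> \<le> measure \<nu> {0..<t} + measure \<nu> {t..}"
    by (rule measure_subadditive) (auto simp: sets_\<nu>)
  finally have "1 \<le> measure \<nu> {0..<t} + measure \<nu> {t..}" .
  moreover have "measure M {\<omega>\<in>space M. X \<omega> < t} = 1 - measure M {\<omega>\<in>space M. t \<le> X \<omega>}"
    using M.prob_neg[of "\<lambda>\<omega>. t \<le> X \<omega>"] X by (simp add: not_le)
  ultimately show ?thesis using tail by linarith
qed

text \<open>The conditional probabilities x \<mapsto> \<mu>(x)(B) are integrable against the law of X1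
  over any Borel subset of N1 (they are measurable there and bounded by 1).\<close>
lemma regular_cond_distr_set_integrable:
  fixes X1 X2 :: "'a \<Rightarrow> real"
  assumes "prob_space M" and X1: "X1 \<in> borel_measurable M"
    and rcd: "regular_cond_distr M X1 X2 N1 \<mu>"
    and A: "A \<in> sets borel" "A \<subseteq> N1" and B: "B \<in> sets borel"
  shows "set_integrable (distr M borel X1) A (\<lambda>x. measure (\<mu> x) B)"
proof -
  interpret F1: prob_space "distr M borel X1"
    using X1 by (rule prob_space.prob_space_distr[OF assms(1)])
  have N1: "N1 \<in> sets borel" and prob_\<mu>: "\<And>x. x \<in> N1 \<Longrightarrow> prob_space (\<mu> x)"
    and meas_\<mu>: "(\<lambda>x. measure (\<mu> x) B) \<in> borel_measurable (restrict_space borel N1)"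
    using rcd B unfolding regular_cond_distr_def by auto
  have "(\<lambda>x. indicator N1 x *\<^sub>R measure (\<mu> x) B) \<in> borel_measurable borel"
    using meas_\<mu> N1 borel_measurable_restrict_space_iff[of N1 borel "\<lambda>x. measure (\<mu> x) B"] by simp
  then have "(\<lambda>x. indicator A x *\<^sub>R (indicator N1 x *\<^sub>R measure (\<mu> x) B))
      \<in> borel_measurable (distr M borel X1)"
    using A by simp
  moreover have "(\<lambda>x. indicator A x *\<^sub>R (indicator N1 x *\<^sub>R measure (\<mu> x) B))
      = (\<lambda>x. indicator A x *\<^sub>R measure (\<mu> x) B)"
    using A by (auto simp: indicator_def fun_eq_iff)
  ultimately show ?thesis
    unfolding set_integrable_def
    by (intro F1.integrable_const_bound[where B=1] AE_I2)
       (use A prob_space.prob_le_1[OF prob_\<mu>] in \<open>auto simp: indicator_def\<close>)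
qed

lemma regular_cond_distr_lower_bound:
  fixes X1 X2 :: "'a \<Rightarrow> real"
  assumes "prob_space M" and X1: "X1 \<in> borel_measurable M" and X2: "X2 \<in> borel_measurable M"
    and rcd: "regular_cond_distr M X1 X2 N1 \<mu>"
    and A: "A \<in> sets borel" and B: "B \<in> sets borel" "B \<subseteq> {0..}"
    and lower: "\<And>x. x \<in> N1 \<Longrightarrow> c \<le> measure (\<mu> x) B" and "0 \<le> c"
  shows "measure M {\<omega>\<in>space M. X1 \<omega> \<in> A} * c
     \<le> measure M {\<omega>\<in>space M. X1 \<omega> \<in> A \<and> X2 \<omega> \<in> B}"
proof -
  interpret M: prob_space M by fact
  have N1: "N1 \<in> sets borel" and full: "measure M {\<omega> \<in> space M. X1 \<omega> \<in> N1} = 1"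
    and disint: "\<And>A'. A' \<in> sets borel \<Longrightarrow> A' \<subseteq> N1 \<Longrightarrow>
        measure M {\<omega> \<in> space M. X1 \<omega> \<in> A' \<and> X2 \<omega> \<in> B} =
        (LINT x:A' | distr M borel X1. measure (\<mu> x) B)"
    using rcd B unfolding regular_cond_distr_def by auto
  define F1 where "F1 = distr M borel X1"
  interpret F1: prob_space F1 unfolding F1_def using X1 by (rule M.prob_space_distr)
  have sets_F1[measurable_cong]: "sets F1 = sets borel" unfolding F1_def by simp
  define A' where "A' = A \<inter> N1"
  have A': "A' \<in> sets borel" "A' \<subseteq> N1" unfolding A'_def using A N1 by auto
  have event: "{\<omega>\<in>space M. X1 \<omega> \<in> S} \<in> sets M" if "S \<in> sets borel" for S
    using X1 that by measurable
  have "AE \<omega> in M. X1 \<omega> \<in> N1"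
    using M.AE_prob_1[OF full] by simp
  then have "measure M {\<omega>\<in>space M. X1 \<omega> \<in> A} = measure M {\<omega>\<in>space M. X1 \<omega> \<in> A'}"
    by (intro measure_eq_AE event A A'(1)) (auto simp: A'_def elim: AE_mp)
  also have "\<dots> = measure F1 A'"
    unfolding F1_def using A' X1 by (simp add: measure_distr vimage_def Int_def conj_commute)
  finally have "measure M {\<omega>\<in>space M. X1 \<omega> \<in> A} * c = (LINT x:A' | F1. c)"
    using A' by (simp add: sets_F1 set_integral_const F1.emeasure_eq_measure)
  also have "\<dots> \<le> (LINT x:A' | F1. measure (\<mu> x) B)"
  proof (rule set_integral_mono)
    show "set_integrable F1 A' (\<lambda>x. c)"
      unfolding set_integrable_def
      by (rule F1.integrable_const_bound[where B=c]) (use A' \<open>0 \<le> c\<close> in \<open>auto simp: indicator_def\<close>)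
    show "set_integrable F1 A' (\<lambda>x. measure (\<mu> x) B)"
      unfolding F1_def by (rule regular_cond_distr_set_integrable[OF assms(1) X1 rcd A' B(1)])
  qed (use A' lower in auto)
  also have "\<dots> = measure M {\<omega> \<in> space M. X1 \<omega> \<in> A' \<and> X2 \<omega> \<in> B}"
    unfolding F1_def by (rule disint[OF A', symmetric])
  also have "\<dots> \<le> measure M {\<omega>\<in>space M. X1 \<omega> \<in> A \<and> X2 \<omega> \<in> B}"
  proof (rule M.finite_measure_mono)
    show "{\<omega>\<in>space M. X1 \<omega> \<in> A \<and> X2 \<omega> \<in> B} \<in> sets M"
      using X1 X2 A B by measurable
  qed (auto simp: A'_def)
  finally show ?thesis .
qed

lemma conditional_st_rectangle:
  fixes X1 X2 :: "'a \<Rightarrow> real"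
  assumes "prob_space M" and X1: "X1 \<in> borel_measurable M" and X2: "X2 \<in> borel_measurable M"
    and rcd: "regular_cond_distr M X1 X2 N1 \<mu>" and st: "\<forall>x\<in>N1. st_le_law (\<mu> x) M X1"
  shows "measure M {\<omega>\<in>space M. X1 \<omega> < s} * measure M {\<omega>\<in>space M. X1 \<omega> < t}
     \<le> measure M {\<omega>\<in>space M. X1 \<omega> < s \<and> X2 \<omega> < t}"
proof -
  interpret M: prob_space M by fact
  have "measure M {\<omega>\<in>space M. X1 \<omega> < t} \<le> measure (\<mu> x) {0..<t}" if "x \<in> N1" for x
    using rcd st that unfolding regular_cond_distr_def
    by (intro st_le_law_lower_cdf[OF assms(1) X1]) auto
  then have "measure M {\<omega>\<in>space M. X1 \<omega> \<in> {..<s}} * measure M {\<omega>\<in>space M. X1 \<omega> < t}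
      \<le> measure M {\<omega>\<in>space M. X1 \<omega> \<in> {..<s} \<and> X2 \<omega> \<in> {0..<t}}"
    by (intro regular_cond_distr_lower_bound[OF assms(1) X1 X2 rcd]) auto
  also have "\<dots> \<le> measure M {\<omega>\<in>space M. X1 \<omega> < s \<and> X2 \<omega> < t}"
  proof (rule M.finite_measure_mono)
    show "{\<omega>\<in>space M. X1 \<omega> < s \<and> X2 \<omega> < t} \<in> sets M"
      using X1 X2 by measurable
  qed auto
  finally show ?thesis by simp
qed

definition survival_of :: "real measure \<Rightarrow> real \<Rightarrow> real" where
  "survival_of \<nu> x = measure \<nu> {x<..}"

lemma survival_of_bounds: "prob_space \<nu> \<Longrightarrow> 0 \<le> survival_of \<nu> x \<and> survival_of \<nu> x \<le> 1"
  unfolding survival_of_def by (simp add: prob_space.prob_le_1)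

lemma survival_of_antimono:
  assumes "finite_measure \<nu>" and "sets \<nu> = sets borel" and "x \<le> y"
  shows "survival_of \<nu> y \<le> survival_of \<nu> x"
  unfolding survival_of_def using assms by (intro finite_measure.finite_measure_mono) auto

lemma survival_of_measurable [measurable]:
  assumes "finite_measure \<nu>" and "sets \<nu> = sets borel"
  shows "survival_of \<nu> \<in> borel_measurable borel"
proof -
  have "mono (\<lambda>x. - survival_of \<nu> x)"
    using survival_of_antimono[OF assms] by (auto simp: mono_def)
  then have "(\<lambda>x. - (- survival_of \<nu> x)) \<in> borel_measurable borel"
    by (intro borel_measurable_uminus borel_measurable_mono)
  then show ?thesis by simp
qed

lemma survival_of_nn_integral:
  assumes "finite_measure \<nu>" and "sets \<nu> = sets borel"
  shows "ennreal (survival_of \<nu> x) = (\<integral>\<^sup>+ s. (if x < s then 1 else 0) \<partial>\<nu>)"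
proof -
  have "(\<lambda>s. if x < s then 1 else 0 :: ennreal) = indicator {x<..}"
    by (auto simp: indicator_def fun_eq_iff)
  then show ?thesis
    using assms by (simp add: survival_of_def finite_measure.emeasure_eq_measure)
qed

text \<open>Fubini applied to the layer-cake representation:
  E[\<nu>(Y,\<infinity>)] = \<integral> P(Y < s) d\<nu>(s).\<close>
lemma survival_of_expectation:
  fixes Y :: "'a \<Rightarrow> real"
  assumes "sigma_finite_measure M" and "finite_measure \<nu>" and sets_\<nu>[measurable_cong]: "sets \<nu> = sets borel"
    and [measurable]: "Y \<in> borel_measurable M"
  shows "(\<integral>\<^sup>+ \<omega>. ennreal (survival_of \<nu> (Y \<omega>)) \<partial>M)
       = (\<integral>\<^sup>+ s. emeasure M {\<omega>\<in>space M. Y \<omega> < s} \<partial>\<nu>)"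
proof -
  interpret \<nu>: finite_measure \<nu> by fact
  interpret pair_sigma_finite M \<nu>
    using assms(1) by (simp add: pair_sigma_finite_def \<nu>.sigma_finite_measure_axioms)
  have "(\<integral>\<^sup>+ \<omega>. ennreal (survival_of \<nu> (Y \<omega>)) \<partial>M)
      = (\<integral>\<^sup>+ \<omega>. (\<integral>\<^sup>+ s. (if Y \<omega> < s then 1 else 0) \<partial>\<nu>) \<partial>M)"
    using survival_of_nn_integral[OF assms(2,3)] by simp
  also have "\<dots> = (\<integral>\<^sup>+ s. (\<integral>\<^sup>+ \<omega>. (if Y \<omega> < s then 1 else 0) \<partial>M) \<partial>\<nu>)"
    by (rule Fubini'[symmetric]) measurable
  also have "\<dots> = (\<integral>\<^sup>+ s. emeasure M {\<omega>\<in>space M. Y \<omega> < s} \<partial>\<nu>)"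
  proof (rule nn_integral_cong)
    fix s
    have "(\<integral>\<^sup>+ \<omega>. (if Y \<omega> < s then 1 else 0) \<partial>M)
        = (\<integral>\<^sup>+ \<omega>. indicator {\<omega>\<in>space M. Y \<omega> < s} \<omega> \<partial>M)"
      by (rule nn_integral_cong) (auto simp: indicator_def)
    then show "(\<integral>\<^sup>+ \<omega>. (if Y \<omega> < s then 1 else 0) \<partial>M) = emeasure M {\<omega>\<in>space M. Y \<omega> < s}"
      by simp
  qed
  finally show ?thesis .
qed

lemma survival_of_product_expectation:
  fixes Y Z :: "'a \<Rightarrow> real"
  assumes "sigma_finite_measure M" and "prob_space \<nu>" and sets_\<nu>[measurable_cong]: "sets \<nu> = sets borel"
    and [measurable]: "Y \<in> borel_measurable M" "Z \<in> borel_measurable M"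
  shows "(\<integral>\<^sup>+ \<omega>. ennreal (survival_of \<nu> (Y \<omega>) * survival_of \<nu> (Z \<omega>)) \<partial>M)
       = (\<integral>\<^sup>+ s. (\<integral>\<^sup>+ t. emeasure M {\<omega>\<in>space M. Y \<omega> < s \<and> Z \<omega> < t} \<partial>\<nu>) \<partial>\<nu>)"
proof -
  interpret \<nu>: prob_space \<nu> by fact
  interpret pair_sigma_finite M \<nu>
    using assms(1) by (simp add: pair_sigma_finite_def \<nu>.sigma_finite_measure_axioms)
  define I where "I \<omega> s t = (if Y \<omega> < s then 1 else 0) * (if Z \<omega> < t then 1 else 0 :: ennreal)"
    for \<omega> s t
  have [measurable]: "(\<lambda>(\<omega>, s). \<integral>\<^sup>+ t. I \<omega> s t \<partial>\<nu>) \<in> borel_measurable (M \<Otimes>\<^sub>M \<nu>)"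
    "(\<lambda>(\<omega>, t). I \<omega> s t) \<in> borel_measurable (M \<Otimes>\<^sub>M \<nu>)" for s
    unfolding I_def by measurable
  have "ennreal (survival_of \<nu> (Y \<omega>) * survival_of \<nu> (Z \<omega>))
      = (\<integral>\<^sup>+ s. (\<integral>\<^sup>+ t. I \<omega> s t \<partial>\<nu>) \<partial>\<nu>)" for \<omega>
  proof -
    have "ennreal (survival_of \<nu> (Y \<omega>) * survival_of \<nu> (Z \<omega>))
        = ennreal (survival_of \<nu> (Y \<omega>)) * ennreal (survival_of \<nu> (Z \<omega>))"
      using survival_of_bounds[OF assms(2)] by (simp add: ennreal_mult'')
    also have "\<dots> = (\<integral>\<^sup>+ s. (if Y \<omega> < s then 1 else 0) \<partial>\<nu>) * (\<integral>\<^sup>+ t. (if Z \<omega> < t then 1 else 0) \<partial>\<nu>)"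
      using survival_of_nn_integral[OF \<nu>.finite_measure_axioms sets_\<nu>] by simp
    also have "\<dots> = (\<integral>\<^sup>+ s. (\<integral>\<^sup>+ t. I \<omega> s t \<partial>\<nu>) \<partial>\<nu>)"
      unfolding I_def by (simp add: nn_integral_cmult nn_integral_multc)
    finally show ?thesis .
  qed
  then have "(\<integral>\<^sup>+ \<omega>. ennreal (survival_of \<nu> (Y \<omega>) * survival_of \<nu> (Z \<omega>)) \<partial>M)
      = (\<integral>\<^sup>+ \<omega>. (\<integral>\<^sup>+ s. (\<integral>\<^sup>+ t. I \<omega> s t \<partial>\<nu>) \<partial>\<nu>) \<partial>M)"
    by simp
  also have "\<dots> = (\<integral>\<^sup>+ s. (\<integral>\<^sup>+ \<omega>. (\<integral>\<^sup>+ t. I \<omega> s t \<partial>\<nu>) \<partial>M) \<partial>\<nu>)"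
    by (rule Fubini'[symmetric]) measurable
  also have "\<dots> = (\<integral>\<^sup>+ s. (\<integral>\<^sup>+ t. (\<integral>\<^sup>+ \<omega>. I \<omega> s t \<partial>M) \<partial>\<nu>) \<partial>\<nu>)"
    by (intro nn_integral_cong Fubini'[symmetric]) measurable
  also have "\<dots> = (\<integral>\<^sup>+ s. (\<integral>\<^sup>+ t. emeasure M {\<omega>\<in>space M. Y \<omega> < s \<and> Z \<omega> < t} \<partial>\<nu>) \<partial>\<nu>)"
  proof (intro nn_integral_cong)
    fix s t
    have "(\<integral>\<^sup>+ \<omega>. I \<omega> s t \<partial>M) = (\<integral>\<^sup>+ \<omega>. indicator {\<omega>\<in>space M. Y \<omega> < s \<and> Z \<omega> < t} \<omega> \<partial>M)"
      by (rule nn_integral_cong) (auto simp: I_def indicator_def)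
    then show "(\<integral>\<^sup>+ \<omega>. I \<omega> s t \<partial>M) = emeasure M {\<omega>\<in>space M. Y \<omega> < s \<and> Z \<omega> < t}"
      by simp
  qed
  finally show ?thesis .
qed

lemma emeasure_less_measurable:
  fixes Y :: "'a \<Rightarrow> real"
  assumes "sigma_finite_measure M" and [measurable]: "Y \<in> borel_measurable M"
  shows "(\<lambda>s. emeasure M {\<omega>\<in>space M. Y \<omega> < s}) \<in> borel_measurable borel"
proof -
  interpret sigma_finite_measure M by fact
  have "{x \<in> space (borel \<Otimes>\<^sub>M M). Y (snd x) < fst x} \<in> sets (borel \<Otimes>\<^sub>M M)"
    by measurable
  from measurable_emeasure_Pair[OF this] show ?thesis
    by (simp add: vimage_def space_pair_measure conj_commute)
qed

text \<open>Integrating the rectangle inequality against \<nu> \<otimes> \<nu> in the two layer-cake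
  representations gives (E[\<nu>(Y,\<infinity>)])^2 \<le> E[\<nu>(Y,\<infinity>) \<nu>(Z,\<infinity>)].\<close>
lemma survival_of_square_le:
  fixes Y Z :: "'a \<Rightarrow> real"
  assumes "prob_space M" and "prob_space \<nu>" and sets_\<nu>[measurable_cong]: "sets \<nu> = sets borel"
    and Y[measurable]: "Y \<in> borel_measurable M" and Z[measurable]: "Z \<in> borel_measurable M"
    and rect: "\<And>s t. measure M {\<omega>\<in>space M. Y \<omega> < s} * measure M {\<omega>\<in>space M. Y \<omega> < t}
                    \<le> measure M {\<omega>\<in>space M. Y \<omega> < s \<and> Z \<omega> < t}"
  shows "(\<integral>\<omega>. survival_of \<nu> (Y \<omega>) \<partial>M)\<^sup>2 \<le> (\<integral>\<omega>. survival_of \<nu> (Y \<omega>) * survival_of \<nu> (Z \<omega>) \<partial>M)"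
proof -
  interpret M: prob_space M by fact
  interpret \<nu>: prob_space \<nu> by fact
  note bounds = survival_of_bounds[OF assms(2)]
  have [measurable]: "survival_of \<nu> \<in> borel_measurable borel"
    by (rule survival_of_measurable[OF \<nu>.finite_measure_axioms sets_\<nu>])
  define P where "P s = emeasure M {\<omega>\<in>space M. Y \<omega> < s}" for s
  have [measurable]: "P \<in> borel_measurable \<nu>"
    unfolding P_def measurable_cong_sets[OF sets_\<nu> refl]
    by (rule emeasure_less_measurable[OF M.sigma_finite_measure_axioms Y])
  define E where "E = (\<integral>\<^sup>+ s. P s \<partial>\<nu>)"
  have E: "ennreal (\<integral>\<omega>. survival_of \<nu> (Y \<omega>) \<partial>M) = E"
  proof -
    have "ennreal (\<integral>\<omega>. survival_of \<nu> (Y \<omega>) \<partial>M) = (\<integral>\<^sup>+ \<omega>. ennreal (survival_of \<nu> (Y \<omega>)) \<partial>M)"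
      by (intro nn_integral_eq_integral[symmetric] M.integrable_const_bound[where B=1])
         (use bounds in auto)
    then show ?thesis
      unfolding E_def P_def
      using survival_of_expectation[OF M.sigma_finite_measure_axioms \<nu>.finite_measure_axioms sets_\<nu> Y]
      by simp
  qed
  have "E * E = (\<integral>\<^sup>+ s. (\<integral>\<^sup>+ t. P s * P t \<partial>\<nu>) \<partial>\<nu>)"
    unfolding E_def by (simp add: nn_integral_cmult nn_integral_multc)
  also have "\<dots> \<le> (\<integral>\<^sup>+ s. (\<integral>\<^sup>+ t. emeasure M {\<omega>\<in>space M. Y \<omega> < s \<and> Z \<omega> < t} \<partial>\<nu>) \<partial>\<nu>)"
    using rect by (intro nn_integral_mono)
      (simp add: P_def M.emeasure_eq_measure ennreal_mult''[symmetric] ennreal_leI)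
  also have "\<dots> = (\<integral>\<^sup>+ \<omega>. ennreal (survival_of \<nu> (Y \<omega>) * survival_of \<nu> (Z \<omega>)) \<partial>M)"
    by (rule survival_of_product_expectation[OF M.sigma_finite_measure_axioms assms(2) sets_\<nu> Y Z, symmetric])
  also have "\<dots> = ennreal (\<integral>\<omega>. survival_of \<nu> (Y \<omega>) * survival_of \<nu> (Z \<omega>) \<partial>M)"
    by (intro nn_integral_eq_integral M.integrable_const_bound[where B=1])
       (use bounds in \<open>auto intro: mult_le_one\<close>)
  finally have "ennreal ((\<integral>\<omega>. survival_of \<nu> (Y \<omega>) \<partial>M)\<^sup>2)
      \<le> ennreal (\<integral>\<omega>. survival_of \<nu> (Y \<omega>) * survival_of \<nu> (Z \<omega>) \<partial>M)"
    using E bounds by (simp add: power2_eq_square ennreal_mult integral_nonneg_AE)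
  then show ?thesis
    using bounds by (simp add: ennreal_le_iff integral_nonneg_AE)
qed

theorem proposition3p2:
  fixes M :: "'a measure" and X1 X2 :: "'a \<Rightarrow> real" and G :: "real \<Rightarrow> real"
  assumes "prob_space M"
    and "X1 \<in> borel_measurable M" and "X2 \<in> borel_measurable M"
    and "\<forall>\<omega>\<in>space M. X1 \<omega> \<ge> 0 \<and> X2 \<omega> \<ge> 0"
    and "survival_fun_nonneg G" and "DFR G"
    and "\<exists>N1 \<mu>. regular_cond_distr M X1 X2 N1 \<mu> \<and> (\<forall>x\<in>N1. st_le_law (\<mu> x) M X1)"
  shows "(\<integral>\<omega>. G (X1 \<omega>) \<partial>M)\<^sup>2 \<le> (\<integral>\<omega>. G (X1 \<omega> + X2 \<omega>) \<partial>M) * G 0"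
proof -
  interpret M: prob_space M by fact
  note X[measurable] = assms(2,3) and nonneg = assms(4)
  obtain \<nu> where \<nu>: "prob_space \<nu>" "sets \<nu> = sets borel" and G: "\<And>t. 0 \<le> t \<Longrightarrow> G t = survival_of \<nu> t"
    using assms(5) unfolding survival_fun_nonneg_def survival_of_def by blast
  obtain N1 \<mu> where rcd: "regular_cond_distr M X1 X2 N1 \<mu>" and st: "\<forall>x\<in>N1. st_le_law (\<mu> x) M X1"
    using assms(7) by blast
  let ?g = "survival_of \<nu>"
  have [measurable]: "?g \<in> borel_measurable borel"
    using \<nu> prob_space.finite_measure survival_of_measurable by blast
  have g_bounds: "0 \<le> ?g x \<and> ?g x \<le> 1" for x using survival_of_bounds[OF \<nu>(1)] .
  have G_bounds: "0 \<le> G y \<and> G y \<le> G 0" if "0 \<le> y" for y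
    using that G g_bounds survival_of_antimono[OF prob_space.finite_measure[OF \<nu>(1)] \<nu>(2)] by simp
  have g_DFR: "?g x * ?g y \<le> ?g (x + y) * ?g 0" if "0 \<le> x" "0 \<le> y" for x y
    using DFR_product_le[OF assms(6) G_bounds that] G that by simp
  have integrable: "integrable M (\<lambda>\<omega>. ?g (Y \<omega>) * ?g (Z \<omega>))"
    if [measurable]: "Y \<in> borel_measurable M" "Z \<in> borel_measurable M" for Y Z
    by (intro M.integrable_const_bound[where B=1] AE_I2) (use g_bounds in \<open>auto intro: mult_le_one\<close>)
  have "(\<integral>\<omega>. G (X1 \<omega>) \<partial>M)\<^sup>2 = (\<integral>\<omega>. ?g (X1 \<omega>) \<partial>M)\<^sup>2"
    using nonneg G by (simp cong: Bochner_Integration.integral_cong)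
  also have "\<dots> \<le> (\<integral>\<omega>. ?g (X1 \<omega>) * ?g (X2 \<omega>) \<partial>M)"
    using conditional_st_rectangle[OF assms(1-3) rcd st]
    by (intro survival_of_square_le[OF assms(1) \<nu> X])
  also have "\<dots> \<le> (\<integral>\<omega>. ?g (X1 \<omega> + X2 \<omega>) * ?g 0 \<partial>M)"
    using nonneg g_DFR by (intro integral_mono integrable) auto
  also have "\<dots> = (\<integral>\<omega>. G (X1 \<omega> + X2 \<omega>) * G 0 \<partial>M)"
    using nonneg G by (simp cong: Bochner_Integration.integral_cong)
  finally show ?thesis by simp
qed

end
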